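(* Let $p$ be a prime with $p\equiv 1\pmod 6$. Then there exist an integer $k$ with $2\le k\le p-1$ and an orthogonal trade $T$ in $B_p$ of index $(1,k)$ such that $|T|$ is not divisible by $p$. More precisely, for any integer $k$ with $2\le k\le (p+1)/2$ and $k^2-k+1\equiv 0\pmod p$ (such $k$ exists), there is an orthogonal trade of index $(1,k)$ in $B_p$ of size $3k(k-1)$.
   Context: All arithmetic is modulo $p$. A Latin square of order $p$ is viewed as a set of (row, column, symbol) triples in $\mathbb{Z}_p^3$. For $1\le k\le p-1$, $B_p(k)$ is the Latin square with symbol $ki+j$ in cell $(i,j)$, $i,j\in\mathbb{Z}_p$; $B_p=B_p(1)$. A Latin trade in a Latin square $L$ is a subset $T\subseteq L$ for which there is a partial Latin square $T'$ (a disjoint mate) such that $T$ and $T'$ occupy the same set of cells, $T\cap T'=\emptyset$, and each row (respectively column) of $T$ contains the same set of symbols as the corresponding row (column) of $T'$. Two Latin squares of order $p$ are orthogonal if superimposing them yields each of the $p^2$ ordered pairs exactly once. An orthogonal trade of index $(\ell,k)$ is a Latin trade $T\subseteq B_p(\ell)$ having a disjoint mate $T'$ such that $(B_p(\ell)\setminus T)\cup T'$ is orthogonal to $B_p(k)$. $|T|$ is the number of triples in $T$. *)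

theory Defs
  imports "HOL-Computational_Algebra.Primes"
begin

text \<open>Z_p is represented by the naturals 0..p-1; a (partial) Latin square of order p
is a set of (row, column, symbol) triples.\<close>

definition Bk :: "nat \<Rightarrow> nat \<Rightarrow> (nat \<times> nat \<times> nat) set" where
  "Bk p k = {(i, j, (k * i + j) mod p) | i j. i < p \<and> j < p}"

definition partial_latin :: "nat \<Rightarrow> (nat \<times> nat \<times> nat) set \<Rightarrow> bool" where
  "partial_latin p L \<longleftrightarrow>
     (\<forall>(i, j, s) \<in> L. i < p \<and> j < p \<and> s < p) \<and>
     (\<forall>i j s s'. (i, j, s) \<in> L \<longrightarrow> (i, j, s') \<in> L \<longrightarrow> s = s') \<and>
     (\<forall>i j j' s. (i, j, s) \<in> L \<longrightarrow> (i, j', s) \<in> L \<longrightarrow> j = j') \<and>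
     (\<forall>i i' j s. (i, j, s) \<in> L \<longrightarrow> (i', j, s) \<in> L \<longrightarrow> i = i')"

definition latin_square :: "nat \<Rightarrow> (nat \<times> nat \<times> nat) set \<Rightarrow> bool" where
  "latin_square p L \<longleftrightarrow> partial_latin p L \<and>
     (\<forall>i j. i < p \<longrightarrow> j < p \<longrightarrow> (\<exists>s. (i, j, s) \<in> L))"

definition cells :: "(nat \<times> nat \<times> nat) set \<Rightarrow> (nat \<times> nat) set" where
  "cells T = {(i, j). \<exists>s. (i, j, s) \<in> T}"

definition row_syms :: "(nat \<times> nat \<times> nat) set \<Rightarrow> nat \<Rightarrow> nat set" where
  "row_syms T i = {s. \<exists>j. (i, j, s) \<in> T}"

definition col_syms :: "(nat \<times> nat \<times> nat) set \<Rightarrow> nat \<Rightarrow> nat set" where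
  "col_syms T j = {s. \<exists>i. (i, j, s) \<in> T}"

definition disjoint_mate :: "nat \<Rightarrow> (nat \<times> nat \<times> nat) set \<Rightarrow> (nat \<times> nat \<times> nat) set \<Rightarrow> bool" where
  "disjoint_mate p T T' \<longleftrightarrow> partial_latin p T' \<and> cells T = cells T' \<and> T \<inter> T' = {} \<and>
     (\<forall>i. row_syms T i = row_syms T' i) \<and> (\<forall>j. col_syms T j = col_syms T' j)"

definition latin_trade :: "nat \<Rightarrow> (nat \<times> nat \<times> nat) set \<Rightarrow> (nat \<times> nat \<times> nat) set \<Rightarrow> bool" where
  "latin_trade p L T \<longleftrightarrow> T \<subseteq> L \<and> (\<exists>T'. disjoint_mate p T T')"

definition orthogonal :: "nat \<Rightarrow> (nat \<times> nat \<times> nat) set \<Rightarrow> (nat \<times> nat \<times> nat) set \<Rightarrow> bool" where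
  "orthogonal p L1 L2 \<longleftrightarrow> latin_square p L1 \<and> latin_square p L2 \<and>
     (\<forall>a b. a < p \<longrightarrow> b < p \<longrightarrow> (\<exists>!c. \<exists>i j. c = (i, j) \<and> (i, j, a) \<in> L1 \<and> (i, j, b) \<in> L2))"

definition orthogonal_trade :: "nat \<Rightarrow> nat \<Rightarrow> nat \<Rightarrow> (nat \<times> nat \<times> nat) set \<Rightarrow> bool" where
  "orthogonal_trade p l k T \<longleftrightarrow> T \<subseteq> Bk p l \<and>
     (\<exists>T'. disjoint_mate p T T' \<and> orthogonal p ((Bk p l - T) \<union> T') (Bk p k))"

end

theory Submission
  imports Defs "HOL-Number_Theory.Residue_Primitive_Roots"
begin

(* Since k\<^sup>2 - k + 1 \<equiv> 0 (mod p), k is a primitive sixth root of unity modulo p. Send cell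
   (i, j) to the point ((1 - k) j, -i) of Z_p\<^sup>2: rows, columns and the symbol classes of B_p(k)
   become the lines y = c, x = c and x - y = c, and the symbol of B_p becomes k x - y. The rotation
   (x, y) \<mapsto> (x - y, x) permutes these three parallel classes and multiplies k x - y by k.
   Inside the punctured hexagon of points at hexagonal distance 1, ..., k - 1 from the origin
   (3k(k - 1) points, pairwise incongruent mod p since k \<le> (p + 1)/2), shift every ring one step
   around and give each cell the symbol of its shifted point. This changes the symbol exactly on
   the hexagon, commutes with the rotation and is Latin in rows by a direct check; by the rotation
   it is then also Latin in columns and orthogonal to B_p(k). *)

section \<open>Latin squares given by symbol functions\<close>

definition fun_square :: "nat \<Rightarrow> (nat \<Rightarrow> nat \<Rightarrow> nat) \<Rightarrow> (nat \<times> nat \<times> nat) set" where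
  "fun_square p f = {(i, j, f i j) | i j. i < p \<and> j < p}"

definition latin_fun :: "nat \<Rightarrow> (nat \<Rightarrow> nat \<Rightarrow> nat) \<Rightarrow> bool" where
  "latin_fun p f \<longleftrightarrow>
     (\<forall>i<p. bij_betw (f i) {..<p} {..<p}) \<and> (\<forall>j<p. bij_betw (\<lambda>i. f i j) {..<p} {..<p})"

lemma mem_fun_square: "(i, j, s) \<in> fun_square p f \<longleftrightarrow> i < p \<and> j < p \<and> s = f i j"
  unfolding fun_square_def by auto

lemma bij_betw_lessThanI:
  fixes f :: "nat \<Rightarrow> nat"
  assumes "\<And>x. x < p \<Longrightarrow> f x < p" and "\<And>x y. x < p \<Longrightarrow> y < p \<Longrightarrow> f x = f y \<Longrightarrow> x = y"
  shows "bij_betw f {..<p} {..<p}"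
proof -
  have inj: "inj_on f {..<p}" using assms(2) by (auto intro: inj_onI)
  moreover have "f ` {..<p} \<subseteq> {..<p}" using assms(1) by auto
  ultimately have "f ` {..<p} = {..<p}" by (intro endo_inj_surj) simp_all
  with inj show ?thesis by (simp add: bij_betw_def)
qed

lemma latin_funI:
  assumes "\<And>i j. i < p \<Longrightarrow> j < p \<Longrightarrow> f i j < p"
    and "\<And>i j j'. i < p \<Longrightarrow> j < p \<Longrightarrow> j' < p \<Longrightarrow> f i j = f i j' \<Longrightarrow> j = j'"
    and "\<And>i i' j. i < p \<Longrightarrow> i' < p \<Longrightarrow> j < p \<Longrightarrow> f i j = f i' j \<Longrightarrow> i = i'"
  shows "latin_fun p f"
  unfolding latin_fun_def by (intro conjI allI impI bij_betw_lessThanI) (use assms in blast)+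

lemma latin_fun_range: "latin_fun p f \<Longrightarrow> i < p \<Longrightarrow> j < p \<Longrightarrow> f i j < p"
  unfolding latin_fun_def bij_betw_def by auto

lemma latin_fun_row_inj: "latin_fun p f \<Longrightarrow> i < p \<Longrightarrow> j < p \<Longrightarrow> j' < p \<Longrightarrow> f i j = f i j' \<Longrightarrow> j = j'"
  unfolding latin_fun_def bij_betw_def inj_on_def by blast

lemma latin_fun_col_inj: "latin_fun p f \<Longrightarrow> i < p \<Longrightarrow> i' < p \<Longrightarrow> j < p \<Longrightarrow> f i j = f i' j \<Longrightarrow> i = i'"
  unfolding latin_fun_def bij_betw_def inj_on_def by blast

lemma latin_square_fun_square:
  assumes "latin_fun p f"
  shows "latin_square p (fun_square p f)"
  unfolding latin_square_def partial_latin_def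
proof (intro conjI allI impI ballI)
  show "\<And>x. x \<in> fun_square p f \<Longrightarrow> case x of (i, j, s) \<Rightarrow> i < p \<and> j < p \<and> s < p"
    using latin_fun_range[OF assms] by (auto simp: fun_square_def)
qed (auto simp: mem_fun_square intro: latin_fun_row_inj[OF assms] latin_fun_col_inj[OF assms])

lemma latin_fun_Bk:
  assumes "coprime k p"
  shows "latin_fun p (\<lambda>i j. (k * i + j) mod p)"
proof (rule latin_funI)
  fix i j :: nat assume "i < p"
  then show "(k * i + j) mod p < p" by simp
next
  fix i j j' assume "j < p" "j' < p" "(k * i + j) mod p = (k * i + j') mod p"
  then have "[j = j'] (mod p)" by (simp add: cong_def[symmetric] cong_add_lcancel_nat)
  then show "j = j'" using \<open>j < p\<close> \<open>j' < p\<close> by (rule cong_less_modulus_unique_nat)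
next
  fix i i' j assume "i < p" "i' < p" "(k * i + j) mod p = (k * i' + j) mod p"
  then have "[k * i = k * i'] (mod p)" by (simp add: cong_def[symmetric] cong_add_rcancel_nat)
  then have "[i = i'] (mod p)" using cong_mult_lcancel_nat[OF assms] by blast
  then show "i = i'" using \<open>i < p\<close> \<open>i' < p\<close> by (rule cong_less_modulus_unique_nat)
qed

lemma Bk_eq_fun_square: "Bk p k = fun_square p (\<lambda>i j. (k * i + j) mod p)"
  unfolding Bk_def fun_square_def by simp

lemma image_disagreement_eq:
  assumes f: "bij_betw f A B" and g: "bij_betw g A B"
  shows "f ` {x \<in> A. f x \<noteq> g x} = g ` {x \<in> A. f x \<noteq> g x}"
proof -
  define E where "E = {x \<in> A. f x = g x}"
  have split: "{x \<in> A. f x \<noteq> g x} = A - E" and "E \<subseteq> A" unfolding E_def by auto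
  have "f ` (A - E) = B - f ` E"
    using f \<open>E \<subseteq> A\<close> inj_on_image_set_diff[of f A A E] by (auto simp: bij_betw_def)
  also have "f ` E = g ` E" unfolding E_def by (rule image_cong) auto
  also have "B - g ` E = g ` (A - E)"
    using g \<open>E \<subseteq> A\<close> inj_on_image_set_diff[of g A A E] by (auto simp: bij_betw_def)
  finally show ?thesis unfolding split .
qed

lemma partial_latin_subset:
  assumes L: "partial_latin p L" and "M \<subseteq> L"
  shows "partial_latin p M"
proof -
  have "\<forall>(i, j, s) \<in> M. i < p \<and> j < p \<and> s < p"
    using L \<open>M \<subseteq> L\<close> unfolding partial_latin_def by fast
  moreover have "\<forall>i j s s'. (i, j, s) \<in> M \<longrightarrow> (i, j, s') \<in> M \<longrightarrow> s = s'"
    using L \<open>M \<subseteq> L\<close> unfolding partial_latin_def by blast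
  moreover have "\<forall>i j j' s. (i, j, s) \<in> M \<longrightarrow> (i, j', s) \<in> M \<longrightarrow> j = j'"
    using L \<open>M \<subseteq> L\<close> unfolding partial_latin_def by blast
  moreover have "\<forall>i i' j s. (i, j, s) \<in> M \<longrightarrow> (i', j, s) \<in> M \<longrightarrow> i = i'"
    using L \<open>M \<subseteq> L\<close> unfolding partial_latin_def by blast
  ultimately show ?thesis unfolding partial_latin_def by blast
qed

lemma row_syms_fun_square_diff:
  "row_syms (fun_square p f - fun_square p g) i =
     (if i < p then f i ` {j \<in> {..<p}. f i j \<noteq> g i j} else {})"
  unfolding row_syms_def by (auto simp: mem_fun_square)

lemma col_syms_fun_square_diff:
  "col_syms (fun_square p f - fun_square p g) j =
     (if j < p then (\<lambda>i. f i j) ` {i \<in> {..<p}. f i j \<noteq> g i j} else {})"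
  unfolding col_syms_def by (auto simp: mem_fun_square)

lemma disjoint_mate_fun_square_diff:
  assumes f: "latin_fun p f" and g: "latin_fun p g"
  shows "disjoint_mate p (fun_square p f - fun_square p g) (fun_square p g - fun_square p f)"
  unfolding disjoint_mate_def
proof (intro conjI allI)
  show "partial_latin p (fun_square p g - fun_square p f)"
    using latin_square_fun_square[OF g] by (auto simp: latin_square_def intro: partial_latin_subset)
  show "cells (fun_square p f - fun_square p g) = cells (fun_square p g - fun_square p f)"
    unfolding cells_def by (auto simp: mem_fun_square)
  show "(fun_square p f - fun_square p g) \<inter> (fun_square p g - fun_square p f) = {}"
    by blast
  fix i
  have "f i ` {j \<in> {..<p}. f i j \<noteq> g i j} = g i ` {j \<in> {..<p}. g i j \<noteq> f i j}" if "i < p"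
    using image_disagreement_eq[of "f i" "{..<p}" "{..<p}" "g i"] f g that
    by (simp add: latin_fun_def eq_commute[of "g i _"])
  then show "row_syms (fun_square p f - fun_square p g) i =
      row_syms (fun_square p g - fun_square p f) i"
    by (simp add: row_syms_fun_square_diff)
  have "(\<lambda>j. f j i) ` {j \<in> {..<p}. f j i \<noteq> g j i} = (\<lambda>j. g j i) ` {j \<in> {..<p}. g j i \<noteq> f j i}"
    if "i < p"
    using image_disagreement_eq[of "\<lambda>j. f j i" "{..<p}" "{..<p}" "\<lambda>j. g j i"] f g that
    by (simp add: latin_fun_def eq_commute[of "g _ i"])
  then show "col_syms (fun_square p f - fun_square p g) i =
      col_syms (fun_square p g - fun_square p f) i"
    by (simp add: col_syms_fun_square_diff)
qed

lemma orthogonal_fun_square: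
  assumes f: "latin_fun p f" and g: "latin_fun p g"
    and inj: "inj_on (\<lambda>(i, j). (f i j, g i j)) ({..<p} \<times> {..<p})"
  shows "orthogonal p (fun_square p f) (fun_square p g)"
proof -
  let ?F = "\<lambda>(i, j). (f i j, g i j)" and ?G = "{..<p} \<times> {..<p}"
  have "?F ` ?G \<subseteq> ?G" using latin_fun_range[OF f] latin_fun_range[OF g] by auto
  with inj have surj: "?F ` ?G = ?G" by (intro endo_inj_surj) simp_all
  have unique: "\<exists>!c. \<exists>i j. c = (i, j) \<and> (i, j, a) \<in> fun_square p f \<and> (i, j, b) \<in> fun_square p g"
    if "a < p" "b < p" for a b
  proof -
    from that surj have "(a, b) \<in> ?F ` ?G" by simp
    then obtain i j where ij: "i < p" "j < p" "f i j = a" "g i j = b" by auto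
    show ?thesis
    proof (rule ex1I[of _ "(i, j)"])
      show "\<exists>i' j'. (i, j) = (i', j') \<and> (i', j', a) \<in> fun_square p f \<and> (i', j', b) \<in> fun_square p g"
        using ij by (simp add: mem_fun_square)
      fix c
      assume "\<exists>i' j'. c = (i', j') \<and> (i', j', a) \<in> fun_square p f \<and> (i', j', b) \<in> fun_square p g"
      then obtain i' j' where c: "c = (i', j')" "i' < p" "j' < p" "f i' j' = a" "g i' j' = b"
        by (auto simp: mem_fun_square)
      have "?F (i', j') = ?F (i, j)" using c ij by simp
      then have "(i', j') = (i, j)" by (rule inj_onD[OF inj]) (use c ij in auto)
      then show "c = (i, j)" using c by simp
    qed
  qed
  show ?thesis
    unfolding orthogonal_def
    using latin_square_fun_square[OF f] latin_square_fun_square[OF g] unique by simp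
qed

lemma orthogonal_trade_fun_square:
  assumes "coprime l p" "coprime k p" "latin_fun p g"
    and "inj_on (\<lambda>(i, j). (g i j, (k * i + j) mod p)) ({..<p} \<times> {..<p})"
  shows "orthogonal_trade p l k (Bk p l - fun_square p g)"
proof -
  have l: "latin_fun p (\<lambda>i j. (l * i + j) mod p)" and k: "latin_fun p (\<lambda>i j. (k * i + j) mod p)"
    using assms(1,2) by (simp_all add: latin_fun_Bk)
  have "Bk p l - (Bk p l - fun_square p g) \<union> (fun_square p g - Bk p l) = fun_square p g" by blast
  moreover have "orthogonal p (fun_square p g) (Bk p k)"
    unfolding Bk_eq_fun_square using assms(3) k assms(4) by (rule orthogonal_fun_square)
  ultimately show ?thesis
    unfolding orthogonal_trade_def Bk_eq_fun_square
    using disjoint_mate_fun_square_diff[OF l assms(3)] by auto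
qed

lemma card_fun_square_diff:
  "card (fun_square p f - fun_square p g) = card {(i, j). i < p \<and> j < p \<and> f i j \<noteq> g i j}"
proof -
  have "fun_square p f - fun_square p g =
      (\<lambda>(i, j). (i, j, f i j)) ` {(i, j). i < p \<and> j < p \<and> f i j \<noteq> g i j}"
    by (auto simp: fun_square_def)
  moreover have "inj_on (\<lambda>(i, j). (i, j, f i j)) X" for X by (auto intro: inj_onI)
  ultimately show ?thesis by (simp add: card_image)
qed


section \<open>Sixth roots of unity modulo a prime\<close>

lemma ex_sixth_cyclotomic_root_mod_prime:
  fixes p :: nat
  assumes p: "prime p" and "p mod 6 = 1"
  shows "\<exists>a::int. int p dvd a^2 - a + 1"
proof -
  have "6 dvd p - 1" using assms(2) by presburger
  then have "card {x \<in> totatives p. ord p x = 6} > 0"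
    using prime_card_elements_with_ord_eq_totient[OF prime_gt_1_nat[OF p] p] by simp
  then obtain b where b: "b \<in> totatives p" "ord p b = 6"
    by (metis (mono_tags, lifting) card_gt_0_iff mem_Collect_eq ex_in_conv)
  define a where "a = int b"
  have "[a ^ 6 = 1] (mod int p)" "\<not> [a ^ 3 = 1] (mod int p)" "\<not> [a ^ 2 = 1] (mod int p)"
    using ord_works[of b p] ord_minimal[of 3 p b] ord_minimal[of 2 p b] b(2)
    unfolding a_def by (simp_all flip: cong_int_iff)
  then have "int p dvd a^6 - 1" "\<not> int p dvd a^3 - 1" "\<not> int p dvd a^2 - 1"
    by (simp_all add: cong_iff_dvd_diff)
  moreover have "a^6 - 1 = (a^3 - 1) * ((a + 1) * (a^2 - a + 1))" "a^2 - 1 = (a - 1) * (a + 1)"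
    by (simp_all add: algebra_simps power2_eq_square power3_eq_cube numeral_eq_Suc)
  moreover have "prime (int p)" using p by simp
  ultimately show ?thesis by (metis prime_dvd_mult_iff dvd_mult)
qed

lemma int_of_nat_sixth_cyclotomic: "int (k^2 - k + 1) = (int k)^2 - int k + 1"
  by (simp add: of_nat_diff power2_eq_square)

lemma ex_small_sixth_cyclotomic_root_mod_prime:
  fixes p :: nat
  assumes p: "prime p" and "p mod 6 = 1"
  shows "\<exists>k. 2 \<le> k \<and> k \<le> (p + 1) div 2 \<and> p dvd k^2 - k + 1"
proof -
  obtain a :: int where a: "int p dvd a^2 - a + 1"
    using ex_sixth_cyclotomic_root_mod_prime[OF assms] ..
  define r where "r = a mod int p"
  have p2: "2 \<le> p" using prime_ge_2_nat[OF p] .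
  have r: "0 \<le> r" "r < int p" unfolding r_def using p2 by simp_all
  have "[r^2 - r + 1 = a^2 - a + 1] (mod int p)"
    unfolding r_def by (intro cong_add cong_diff cong_pow) (simp_all add: cong_def)
  then have dvd_r: "int p dvd r^2 - r + 1" using a by (simp add: cong_dvd_iff)
  have "r \<noteq> 0" "r \<noteq> 1" using dvd_r p2 by auto
  show ?thesis
  proof (cases "2 * r \<le> int p + 1")
    case True
    have "int p dvd int (nat r ^ 2 - nat r + 1)"
      unfolding int_of_nat_sixth_cyclotomic using dvd_r r by simp
    then have "p dvd nat r ^ 2 - nat r + 1" by (simp only: int_dvd_int_iff)
    moreover have "2 \<le> nat r" "nat r \<le> (p + 1) div 2" using True r \<open>r \<noteq> 0\<close> \<open>r \<noteq> 1\<close> by linarith+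
    ultimately show ?thesis by blast
  next
    case False
    define k where "k = nat (int p + 1 - r)"
    have k: "int k = int p + 1 - r" unfolding k_def using r by simp
    have "(int k)^2 - int k + 1 = (r^2 - r + 1) + int p * (int p + 1 - 2 * r)"
      unfolding k by (simp add: algebra_simps power2_eq_square)
    then have "int p dvd int (k^2 - k + 1)"
      unfolding int_of_nat_sixth_cyclotomic using dvd_r by (metis dvd_add dvd_triv_left)
    then have "p dvd k^2 - k + 1" by (simp only: int_dvd_int_iff)
    moreover have "2 \<le> k" "k \<le> (p + 1) div 2" using False r \<open>r \<noteq> 1\<close> k by linarith+
    ultimately show ?thesis by blast
  qed
qed


section \<open>The punctured hexagon\<close>

definition punctured_hexagon :: "int \<Rightarrow> (int \<times> int) set" where
  "punctured_hexagon n = {(x, y). \<bar>x\<bar> \<le> n \<and> \<bar>y\<bar> \<le> n \<and> \<bar>x - y\<bar> \<le> n \<and> (x, y) \<noteq> (0, 0)}"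

lemma card_punctured_hexagon:
  assumes "0 \<le> n"
  shows "card (punctured_hexagon n) = 3 * (nat n * nat (n + 1))"
proof -
  define B where "B = {1..n} \<times> {0..n}"
  define R1 where "R1 = (\<lambda>(a, t). (a, a - n + t)) ` B"
  define R2 where "R2 = (\<lambda>(a, t). (n - a - t, n - t)) ` B"
  define R3 where "R3 = (\<lambda>(a, t). (t - n, - a)) ` B"
  have "card R1 = card B" unfolding R1_def by (rule card_image) (auto intro: inj_onI)
  moreover have "card R2 = card B" unfolding R2_def by (rule card_image) (auto intro: inj_onI)
  moreover have "card R3 = card B" unfolding R3_def by (rule card_image) (auto intro: inj_onI)
  moreover have "card B = nat n * nat (n + 1)" unfolding B_def by (simp add: card_cartesian_product)
  moreover have "finite R1" "finite R2" "finite R3" unfolding R1_def R2_def R3_def B_def by simp_all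
  moreover have "R1 \<inter> R2 = {}" "(R1 \<union> R2) \<inter> R3 = {}" unfolding R1_def R2_def R3_def B_def by auto
  moreover have "punctured_hexagon n = R1 \<union> R2 \<union> R3"
  proof (intro equalityI subsetI)
    fix P assume "P \<in> punctured_hexagon n"
    then obtain x y where P: "P = (x, y)" "\<bar>x\<bar> \<le> n" "\<bar>y\<bar> \<le> n" "\<bar>x - y\<bar> \<le> n" "(x, y) \<noteq> (0, 0)"
      unfolding punctured_hexagon_def by auto
    have "x \<noteq> 0 \<or> y \<noteq> 0" using P(5) by simp
    then consider "1 \<le> x" "y \<le> x" | "0 \<le> y" "x < y" | "x \<le> 0" "y < 0" by linarith
    then show "P \<in> R1 \<union> R2 \<union> R3"
    proof cases
      case 1
      then have "(x, y) = (\<lambda>(a, t). (a, a - n + t)) (x, y - x + n)" "(x, y - x + n) \<in> B"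
        using P unfolding B_def by auto
      then show ?thesis unfolding P(1) R1_def by blast
    next
      case 2
      then have "(x, y) = (\<lambda>(a, t). (n - a - t, n - t)) (y - x, n - y)" "(y - x, n - y) \<in> B"
        using P unfolding B_def by auto
      then show ?thesis unfolding P(1) R2_def by blast
    next
      case 3
      then have "(x, y) = (\<lambda>(a, t). (t - n, - a)) (- y, x + n)" "(- y, x + n) \<in> B"
        using P unfolding B_def by auto
      then show ?thesis unfolding P(1) R3_def by blast
    qed
  qed (auto simp: punctured_hexagon_def R1_def R2_def R3_def B_def)
  ultimately show ?thesis by (simp add: card_Un_disjoint)
qed

text \<open>The rings of the punctured hexagon are the sets \<open>max |x| |y| |x - y| = r\<close>;
  \<open>hex_step\<close> moves each point one step along its ring, the six branches being the six sides.\<close>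

fun hex_step :: "int \<times> int \<Rightarrow> int \<times> int" where
  "hex_step (x, y) =
     (if 0 \<le> x \<and> x < y then (x + 1, y)
      else if 1 \<le> y \<and> y \<le> x then (x, y - 1)
      else if 1 \<le> x \<and> y \<le> 0 then (x - 1, y - 1)
      else if x \<le> 0 \<and> y < x then (x - 1, y)
      else if y \<le> -1 \<and> x \<le> y then (x, y + 1)
      else (x + 1, y + 1))"

definition rot60 :: "int \<times> int \<Rightarrow> int \<times> int" where
  "rot60 = (\<lambda>(x, y). (x - y, x))"

lemma hex_step_unit:
  "hex_step (x, y) \<in>
     {(x + 1, y), (x, y - 1), (x - 1, y - 1), (x - 1, y), (x, y + 1), (x + 1, y + 1)}"
  by simp

lemma hex_step_rot60:
  assumes "P \<noteq> (0, 0)"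
  shows "hex_step (rot60 P) = rot60 (hex_step P)"
proof -
  obtain x y where P: "P = (x, y)" by fastforce
  with assms consider "0 \<le> x \<and> x < y" | "1 \<le> y \<and> y \<le> x" | "1 \<le> x \<and> y \<le> 0"
    | "x \<le> 0 \<and> y < x" | "y \<le> -1 \<and> x \<le> y" | "x \<le> -1 \<and> 0 \<le> y"
    by force
  then show ?thesis unfolding P rot60_def by cases simp_all
qed

definition rot300 :: "int \<times> int \<Rightarrow> int \<times> int" where
  "rot300 = (\<lambda>(x, y). (y, y - x))"

lemma rot60_punctured_hexagon: "P \<in> punctured_hexagon n \<Longrightarrow> rot60 P \<in> punctured_hexagon n"
  by (auto simp: rot60_def punctured_hexagon_def)

lemma rot300_punctured_hexagon: "P \<in> punctured_hexagon n \<Longrightarrow> rot300 P \<in> punctured_hexagon n"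
  by (auto simp: rot300_def punctured_hexagon_def)

text \<open>If \<open>hex_step (x, y) = (x + a, y + b)\<close> then \<open>k (x + a) - (y + b) \<equiv> k (x + a + n b) - y\<close>
  modulo \<open>k\<^sup>2 - k + 1\<close>, where \<open>n = k - 1\<close>: in row \<open>y\<close> the shifted symbol at \<open>x\<close> is the
  original symbol at \<open>hex_row_perm n y x\<close>.\<close>

definition hex_row_perm :: "int \<Rightarrow> int \<Rightarrow> int \<Rightarrow> int" where
  "hex_row_perm n y x =
     (if (x, y) \<in> punctured_hexagon n
      then fst (hex_step (x, y)) + n * (snd (hex_step (x, y)) - y) else x)"

lemma hex_row_perm_eq:
  "hex_row_perm n y x =
     (if y = 0 then (if 1 \<le> x \<and> x \<le> n then x - n - 1 else if - n \<le> x \<and> x \<le> -1 then x + n + 1 else x)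
      else if 1 \<le> y \<and> y \<le> n then
        (if y - n \<le> x \<and> x \<le> -1 then x + n + 1 else if 0 \<le> x \<and> x \<le> y - 1 then x + 1
         else if y \<le> x \<and> x \<le> n then x - n else x)
      else if - n \<le> y \<and> y \<le> -1 then
        (if - n \<le> x \<and> x \<le> y then x + n else if y + 1 \<le> x \<and> x \<le> 0 then x - 1
         else if 1 \<le> x \<and> x \<le> y + n then x - n - 1 else x)
      else x)"
  unfolding hex_row_perm_def punctured_hexagon_def by (auto simp: algebra_simps)

lemma hex_row_perm_bound: "1 \<le> n \<Longrightarrow> n \<le> h \<Longrightarrow> \<bar>x\<bar> \<le> h \<Longrightarrow> \<bar>hex_row_perm n y x\<bar> \<le> h"
  unfolding hex_row_perm_eq by auto

lemma hex_row_perm_inj: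
  "1 \<le> n \<Longrightarrow> n \<le> h \<Longrightarrow> \<bar>x\<bar> \<le> h \<Longrightarrow> \<bar>x'\<bar> \<le> h \<Longrightarrow> hex_row_perm n y x = hex_row_perm n y x' \<Longrightarrow> x = x'"
  unfolding hex_row_perm_eq by (auto split: if_splits)


section \<open>The trade\<close>

lemma minus_mod_eq_iff: "(- a) mod m = (- b) mod m \<longleftrightarrow> a mod m = b mod m" for a b m :: int
  by (metis mod_minus_cong minus_minus)

locale hexagonal_trade =
  fixes p k :: nat
  assumes prime: "prime p" and two_le_k: "2 \<le> k" and k_le: "k \<le> (p + 1) div 2"
    and p_dvd: "p dvd k^2 - k + 1"
begin

abbreviation q :: int where "q \<equiv> int p"
abbreviation K :: int where "K \<equiv> int k"
abbreviation n :: int where "n \<equiv> int k - 1"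

definition h :: int where "h = (q - 1) div 2"

lemma q_dvd: "q dvd K^2 - K + 1"
  using p_dvd by (metis int_dvd_int_iff int_of_nat_sixth_cyclotomic)

lemma mod_add_mult_cyclotomic: "(a + c * (K^2 - K + 1)) mod q = a mod q"
  using q_dvd by (auto elim!: dvdE simp: mult.commute[of c] mult.assoc)

lemma q_eq: "q = 2 * h + 1"
proof -
  have "even (K * (K - 1))" by simp
  then have "odd (K^2 - K + 1)" by (simp add: power2_eq_square algebra_simps)
  then have "odd q" using q_dvd by (meson dvd_trans)
  then show ?thesis unfolding h_def by presburger
qed

lemma n_bounds: "1 \<le> n" "n \<le> h"
  using two_le_k k_le q_eq by linarith+

lemma K_bounds: "0 < K" "K < q"
  using n_bounds q_eq by linarith+

lemma q_pos: "0 < q" using K_bounds by linarith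

definition centre :: "int \<Rightarrow> int" where
  "centre a = (a + h) mod q - h"

lemma abs_centre_le: "\<bar>centre a\<bar> \<le> h"
  unfolding centre_def abs_le_iff
  using q_eq pos_mod_bound[of q "a + h"] pos_mod_sign[of q "a + h"] q_pos by linarith

lemma centre_mod: "centre a mod q = a mod q"
  unfolding centre_def by (simp add: mod_diff_left_eq)

lemma centre_id: "\<bar>a\<bar> \<le> h \<Longrightarrow> centre a = a"
  unfolding centre_def using q_eq by (simp add: mod_pos_pos_trivial)

lemma centre_eq_iff: "centre a = centre b \<longleftrightarrow> a mod q = b mod q"
  by (metis centre_def centre_mod mod_add_cong)

lemma eq_if_mod_eq: "\<bar>a\<bar> \<le> h \<Longrightarrow> \<bar>b\<bar> \<le> h \<Longrightarrow> a mod q = b mod q \<Longrightarrow> a = b"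
  by (metis centre_eq_iff centre_id)

lemma mult_K_cancel: "(K * a) mod q = (K * b) mod q \<Longrightarrow> a mod q = b mod q"
proof -
  assume "(K * a) mod q = (K * b) mod q"
  then have "q dvd K * (a - b)" by (simp add: mod_eq_dvd_iff right_diff_distrib)
  moreover have "\<not> q dvd K" using K_bounds zdvd_imp_le by fastforce
  moreover have "prime q" using prime by simp
  ultimately have "q dvd a - b" using prime_dvd_mult_iff by blast
  then show ?thesis by (simp add: mod_eq_dvd_iff)
qed

text \<open>Since \<open>K (1 - K) = 1 - (K\<^sup>2 - K + 1)\<close>, the residue of \<open>1 - K\<close> is the inverse of \<open>K\<close>.\<close>

lemma mult_inverse_K: "(K * ((1 - K) * a)) mod q = a mod q"
proof -
  have "K * ((1 - K) * a) = a + (- a) * (K^2 - K + 1)" by (simp add: algebra_simps power2_eq_square)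
  then show ?thesis by (simp only: mod_add_mult_cyclotomic)
qed

lemma mult_1_minus_K_cancel: "((1 - K) * a) mod q = ((1 - K) * b) mod q \<Longrightarrow> a mod q = b mod q"
  by (metis mod_mult_right_eq mult_inverse_K)

definition symb :: "int \<times> int \<Rightarrow> int" where
  "symb P = K * fst P - snd P"

lemma symb_mod_cong:
  "a mod q = a' mod q \<Longrightarrow> b mod q = b' mod q \<Longrightarrow> symb (a, b) mod q = symb (a', b') mod q"
  unfolding symb_def fst_conv snd_conv by (intro mod_diff_cong mod_mult_cong) simp_all

lemma symb_rot60: "symb (rot60 P) mod q = (K * symb P) mod q"
proof -
  obtain x y where P: "P = (x, y)" by fastforce
  have "symb (rot60 P) = K * symb P + (- x) * (K^2 - K + 1)"
    unfolding P symb_def rot60_def by (simp add: algebra_simps power2_eq_square)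
  then show ?thesis by (simp only: mod_add_mult_cyclotomic)
qed

lemma symb_hex_step_neq: "symb (hex_step P) mod q \<noteq> symb P mod q"
proof
  obtain x y where P: "P = (x, y)" by fastforce
  define d where "d = symb (hex_step P) - symb P"
  assume "symb (hex_step P) mod q = symb P mod q"
  then have "q dvd d" unfolding d_def by (simp add: mod_eq_dvd_iff)
  have "d \<in> {K, 1, 1 - K, - K, -1, K - 1}"
    using hex_step_unit[of x y] unfolding d_def P symb_def by (auto simp: algebra_simps)
  then have "d \<noteq> 0" "\<bar>d\<bar> < q" using K_bounds two_le_k by auto
  with \<open>q dvd d\<close> show False using dvd_imp_le_int[of d q] by simp
qed

definition centre_pair :: "int \<times> int \<Rightarrow> int \<times> int" where
  "centre_pair P = (centre (fst P), centre (snd P))"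

lemma centre_pair_eq_iff:
  "centre_pair P = centre_pair P' \<longleftrightarrow> fst P mod q = fst P' mod q \<and> snd P mod q = snd P' mod q"
  unfolding centre_pair_def by (simp add: centre_eq_iff)

lemma centre_pair_hexagon: "Q \<in> punctured_hexagon n \<Longrightarrow> centre_pair Q = Q"
  using n_bounds unfolding centre_pair_def punctured_hexagon_def by (auto intro!: centre_id)

lemma centre_pair_rot60: "centre_pair (rot60 (centre_pair P)) = centre_pair (rot60 P)"
proof -
  have "(centre x - centre y) mod q = (x - y) mod q" for x y by (metis centre_mod mod_diff_eq)
  then show ?thesis
    unfolding centre_pair_eq_iff unfolding centre_pair_def rot60_def
    by (simp add: case_prod_beta centre_mod)
qed

lemma symb_centre_pair: "symb (centre_pair P) mod q = symb P mod q"
  unfolding centre_pair_def by (cases P) (simp, rule symb_mod_cong; simp add: centre_mod)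

definition shifted_symb :: "int \<times> int \<Rightarrow> int" where
  "shifted_symb P = (if P \<in> punctured_hexagon n then symb (hex_step P) else symb P) mod q"

definition trade_symb :: "int \<times> int \<Rightarrow> int" where
  "trade_symb P = shifted_symb (centre_pair P)"

lemma shifted_symb_row: "shifted_symb (x, y) = (K * hex_row_perm n y x - y) mod q"
proof (cases "(x, y) \<in> punctured_hexagon n")
  case True
  obtain x' y' where step: "hex_step (x, y) = (x', y')" by fastforce
  have "K * hex_row_perm n y x - y = symb (x', y') + (y' - y) * (K^2 - K + 1)"
    using True unfolding hex_row_perm_def step symb_def
    by (simp add: algebra_simps power2_eq_square)
  with True show ?thesis
    unfolding shifted_symb_def step by (simp only: mod_add_mult_cyclotomic if_True)
qed (simp add: shifted_symb_def hex_row_perm_def symb_def)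

lemma trade_symb_bounds: "0 \<le> trade_symb P" "trade_symb P < q"
  unfolding trade_symb_def shifted_symb_def using q_pos by simp_all

lemma trade_symb_row_inj:
  assumes "snd P mod q = snd P' mod q" and "trade_symb P = trade_symb P'"
  shows "fst P mod q = fst P' mod q"
proof -
  obtain x x' y where c: "centre_pair P = (x, y)" "centre_pair P' = (x', y)"
    using assms(1) unfolding centre_pair_def by (simp add: centre_eq_iff)
  then have x_def: "x = centre (fst P)" "x' = centre (fst P')" by (simp_all add: centre_pair_def)
  then have x: "\<bar>x\<bar> \<le> h" "\<bar>x'\<bar> \<le> h" using abs_centre_le by simp_all
  have "(K * hex_row_perm n y x - y) mod q = (K * hex_row_perm n y x' - y) mod q"
    using assms(2) c unfolding trade_symb_def by (simp add: shifted_symb_row)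
  then have "(K * hex_row_perm n y x) mod q = (K * hex_row_perm n y x') mod q"
    by (simp add: mod_eq_dvd_iff)
  then have "hex_row_perm n y x mod q = hex_row_perm n y x' mod q" by (rule mult_K_cancel)
  with hex_row_perm_bound[OF n_bounds x(1)] hex_row_perm_bound[OF n_bounds x(2)]
  have "hex_row_perm n y x = hex_row_perm n y x'" by (rule eq_if_mod_eq)
  then have "x = x'" by (rule hex_row_perm_inj[OF n_bounds x])
  then show ?thesis using x_def by (simp add: centre_eq_iff)
qed

lemma centre_pair_rot60_hexagon:
  assumes "centre_pair P \<in> punctured_hexagon n"
  shows "centre_pair (rot60 P) = rot60 (centre_pair P)"
  using centre_pair_rot60[of P] centre_pair_hexagon[OF rot60_punctured_hexagon[OF assms]] by simp

lemma centre_pair_rot60_hexagon_iff: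
  "centre_pair (rot60 P) \<in> punctured_hexagon n \<longleftrightarrow> centre_pair P \<in> punctured_hexagon n"
proof
  assume H: "centre_pair (rot60 P) \<in> punctured_hexagon n"
  define Q where "Q = rot300 (centre_pair (rot60 P))"
  have "Q \<in> punctured_hexagon n" unfolding Q_def using H by (rule rot300_punctured_hexagon)
  moreover have "centre_pair Q = centre_pair P"
  proof -
    obtain x y where P: "P = (x, y)" by fastforce
    have "(centre x - centre (x - y)) mod q = (x - (x - y)) mod q"
      by (rule mod_diff_cong) (simp_all add: centre_mod)
    then show ?thesis
      unfolding Q_def centre_pair_eq_iff P
      by (simp add: rot300_def rot60_def centre_pair_def centre_mod)
  qed
  ultimately show "centre_pair P \<in> punctured_hexagon n" using centre_pair_hexagon[of Q] by simp
next
  assume "centre_pair P \<in> punctured_hexagon n"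
  then show "centre_pair (rot60 P) \<in> punctured_hexagon n"
    by (simp add: centre_pair_rot60_hexagon rot60_punctured_hexagon)
qed

lemma trade_symb_rot60: "trade_symb (rot60 P) = (K * trade_symb P) mod q"
proof (cases "centre_pair P \<in> punctured_hexagon n")
  case True
  then have "centre_pair P \<noteq> (0, 0)" unfolding punctured_hexagon_def by auto
  have "trade_symb (rot60 P) = symb (hex_step (rot60 (centre_pair P))) mod q"
    using True unfolding trade_symb_def shifted_symb_def
    by (simp add: centre_pair_rot60_hexagon rot60_punctured_hexagon)
  also have "\<dots> = symb (rot60 (hex_step (centre_pair P))) mod q"
    using \<open>centre_pair P \<noteq> (0, 0)\<close> by (simp add: hex_step_rot60)
  also have "\<dots> = (K * symb (hex_step (centre_pair P))) mod q" by (rule symb_rot60)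
  also have "\<dots> = (K * trade_symb P) mod q"
    using True unfolding trade_symb_def shifted_symb_def by (simp add: mod_mult_right_eq)
  finally show ?thesis .
next
  case False
  then have "trade_symb (rot60 P) = symb (centre_pair (rot60 P)) mod q"
    unfolding trade_symb_def shifted_symb_def by (simp add: centre_pair_rot60_hexagon_iff)
  also have "\<dots> = (K * symb P) mod q" by (simp add: symb_centre_pair symb_rot60)
  also have "\<dots> = (K * (symb (centre_pair P) mod q)) mod q"
    by (metis symb_centre_pair mod_mult_right_eq)
  also have "\<dots> = (K * trade_symb P) mod q"
    using False unfolding trade_symb_def shifted_symb_def by simp
  finally show ?thesis .
qed

lemma trade_symb_rot60_eq_iff:
  "trade_symb (rot60 P) = trade_symb (rot60 P') \<longleftrightarrow> trade_symb P = trade_symb P'"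
proof
  assume "trade_symb (rot60 P) = trade_symb (rot60 P')"
  then have "(K * trade_symb P) mod q = (K * trade_symb P') mod q" by (simp add: trade_symb_rot60)
  then have "trade_symb P mod q = trade_symb P' mod q" by (rule mult_K_cancel)
  with trade_symb_bounds show "trade_symb P = trade_symb P'" by (simp add: mod_pos_pos_trivial)
qed (simp add: trade_symb_rot60)

lemma trade_symb_col_inj:
  assumes "fst P mod q = fst P' mod q" and "trade_symb P = trade_symb P'"
  shows "snd P mod q = snd P' mod q"
proof -
  obtain x y x' y' where P: "P = (x, y)" "P' = (x', y')" by fastforce
  have "snd (rot60 P) mod q = snd (rot60 P') mod q" using assms(1) by (simp add: P rot60_def)
  moreover have "trade_symb (rot60 P) = trade_symb (rot60 P')"
    using assms(2) by (simp only: trade_symb_rot60_eq_iff)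
  ultimately have "fst (rot60 P) mod q = fst (rot60 P') mod q" by (rule trade_symb_row_inj)
  then have xy: "(x - y) mod q = (x' - y') mod q" by (simp add: P rot60_def)
  have "x mod q = x' mod q" using assms(1) by (simp add: P)
  from this xy have "(x - (x - y)) mod q = (x' - (x' - y')) mod q" by (rule mod_diff_cong)
  then show ?thesis unfolding P by simp
qed

lemma trade_symb_diag_inj:
  assumes "(fst P - snd P) mod q = (fst P' - snd P') mod q" and "trade_symb P = trade_symb P'"
  shows "fst P mod q = fst P' mod q \<and> snd P mod q = snd P' mod q"
proof -
  obtain x y x' y' where P: "P = (x, y)" "P' = (x', y')" by fastforce
  have "fst (rot60 P) mod q = fst (rot60 P') mod q" using assms(1) by (simp add: P rot60_def)
  moreover have "trade_symb (rot60 P) = trade_symb (rot60 P')"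
    using assms(2) by (simp only: trade_symb_rot60_eq_iff)
  ultimately have "snd (rot60 P) mod q = snd (rot60 P') mod q" by (rule trade_symb_col_inj)
  then have x: "x mod q = x' mod q" by (simp add: P rot60_def)
  moreover have "(x - y) mod q = (x' - y') mod q" using assms(1) by (simp add: P)
  ultimately have "(x - (x - y)) mod q = (x' - (x' - y')) mod q" by (rule mod_diff_cong)
  with x show ?thesis unfolding P by simp
qed

definition cell_point :: "nat \<Rightarrow> nat \<Rightarrow> int \<times> int" where
  "cell_point i j = ((1 - K) * int j, - int i)"

definition trade_square :: "nat \<Rightarrow> nat \<Rightarrow> nat" where
  "trade_square i j = nat (trade_symb (cell_point i j))"

lemma cell_point_fst_inj:
  assumes "j < p" "j' < p" and "fst (cell_point i j) mod q = fst (cell_point i' j') mod q"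
  shows "j = j'"
proof -
  from assms(3) have "((1 - K) * int j) mod q = ((1 - K) * int j') mod q"
    by (simp add: cell_point_def)
  then have "int j mod q = int j' mod q" by (rule mult_1_minus_K_cancel)
  with assms(1,2) show ?thesis by (simp add: mod_pos_pos_trivial)
qed

lemma cell_point_snd_inj:
  assumes "i < p" "i' < p" and "snd (cell_point i j) mod q = snd (cell_point i' j') mod q"
  shows "i = i'"
  using assms by (simp add: cell_point_def minus_mod_eq_iff mod_pos_pos_trivial)

lemma trade_square_eq_iff:
  "trade_square i j = trade_square i' j' \<longleftrightarrow>
     trade_symb (cell_point i j) = trade_symb (cell_point i' j')"
  unfolding trade_square_def using trade_symb_bounds by (simp add: eq_nat_nat_iff)

lemma latin_fun_trade_square: "latin_fun p trade_square"
proof (rule latin_funI)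
  fix i j show "trade_square i j < p"
    unfolding trade_square_def using trade_symb_bounds by (simp add: nat_less_iff)
next
  fix i j j' assume j: "j < p" "j' < p" and eq: "trade_square i j = trade_square i j'"
  have "snd (cell_point i j) mod q = snd (cell_point i j') mod q" by (simp add: cell_point_def)
  moreover have "trade_symb (cell_point i j) = trade_symb (cell_point i j')"
    using eq by (simp only: trade_square_eq_iff)
  ultimately have "fst (cell_point i j) mod q = fst (cell_point i j') mod q"
    by (rule trade_symb_row_inj)
  then show "j = j'" by (rule cell_point_fst_inj[OF j])
next
  fix i i' j assume i: "i < p" "i' < p" and eq: "trade_square i j = trade_square i' j"
  have "fst (cell_point i j) mod q = fst (cell_point i' j) mod q" by (simp add: cell_point_def)
  moreover have "trade_symb (cell_point i j) = trade_symb (cell_point i' j)"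
    using eq by (simp only: trade_square_eq_iff)
  ultimately have "snd (cell_point i j) mod q = snd (cell_point i' j) mod q"
    by (rule trade_symb_col_inj)
  then show "i = i'" by (rule cell_point_snd_inj[OF i])
qed

lemma trade_square_orthogonal_Bk:
  "inj_on (\<lambda>(i, j). (trade_square i j, (k * i + j) mod p)) ({..<p} \<times> {..<p})"
proof (rule inj_onI, clarify)
  fix i j i' j' assume ij: "i < p" "j < p" "i' < p" "j' < p"
    and eq: "trade_square i j = trade_square i' j'" "(k * i + j) mod p = (k * i' + j') mod p"
  have diag: "fst (cell_point i j) - snd (cell_point i j) =
      (1 - K) * (K * int i + int j) + int i * (K^2 - K + 1)" for i j
    by (simp add: cell_point_def algebra_simps power2_eq_square)
  have "int ((k * i + j) mod p) = int ((k * i' + j') mod p)" using eq(2) by simp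
  then have "(K * int i + int j) mod q = (K * int i' + int j') mod q" by (simp add: zmod_int)
  then have "((1 - K) * (K * int i + int j)) mod q = ((1 - K) * (K * int i' + int j')) mod q"
    by (rule mod_mult_cong[OF refl])
  then have "(fst (cell_point i j) - snd (cell_point i j)) mod q =
      (fst (cell_point i' j') - snd (cell_point i' j')) mod q"
    unfolding diag by (simp only: mod_add_mult_cyclotomic)
  moreover have "trade_symb (cell_point i j) = trade_symb (cell_point i' j')"
    using eq(1) by (simp only: trade_square_eq_iff)
  ultimately have "fst (cell_point i j) mod q = fst (cell_point i' j') mod q \<and>
      snd (cell_point i j) mod q = snd (cell_point i' j') mod q"
    by (rule trade_symb_diag_inj)
  then show "i = i' \<and> j = j'"
    using cell_point_fst_inj[of j j' i i'] cell_point_snd_inj[of i i' j j'] ij by blast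
qed

lemma symb_cell_point: "symb (cell_point i j) mod q = int ((i + j) mod p)"
proof -
  have "symb (cell_point i j) = (int i + int j) + (- int j) * (K^2 - K + 1)"
    unfolding symb_def cell_point_def by (simp add: algebra_simps power2_eq_square)
  then show ?thesis by (simp only: mod_add_mult_cyclotomic zmod_int of_nat_add)
qed

lemma trade_square_neq_iff:
  "trade_square i j \<noteq> (i + j) mod p \<longleftrightarrow> centre_pair (cell_point i j) \<in> punctured_hexagon n"
proof -
  let ?c = "centre_pair (cell_point i j)"
  have symb_c: "symb ?c mod q = int ((i + j) mod p)"
    by (simp only: symb_centre_pair symb_cell_point)
  show ?thesis
  proof (cases "?c \<in> punctured_hexagon n")
    case True
    then have "trade_square i j = nat (symb (hex_step ?c) mod q)"
      unfolding trade_square_def trade_symb_def shifted_symb_def by simp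
    moreover have "symb (hex_step ?c) mod q \<noteq> int ((i + j) mod p)"
      using symb_hex_step_neq[of ?c] symb_c by simp
    ultimately show ?thesis using True q_pos by (simp add: nat_eq_iff)
  qed (simp add: trade_square_def trade_symb_def shifted_symb_def symb_c)
qed

lemma bij_betw_cell_point:
  "bij_betw (\<lambda>(i, j). centre_pair (cell_point i j))
     {(i, j). i < p \<and> j < p \<and> centre_pair (cell_point i j) \<in> punctured_hexagon n}
     (punctured_hexagon n)"
  (is "bij_betw ?f ?C ?H")
proof (rule bij_betw_imageI)
  show "inj_on ?f ?C"
  proof (rule inj_onI, clarify)
    fix i j i' j' assume ij: "i < p" "j < p" "i' < p" "j' < p"
      and "centre_pair (cell_point i j) = centre_pair (cell_point i' j')"
    then show "i = i' \<and> j = j'"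
      using cell_point_fst_inj[of j j' i i'] cell_point_snd_inj[of i i' j j']
      by (simp add: centre_pair_eq_iff)
  qed
  have "P \<in> ?f ` ?C" if P: "P \<in> ?H" for P
  proof -
    obtain x y where xy: "P = (x, y)" by fastforce
    define i where "i = nat ((- y) mod q)"
    define j where "j = nat ((K * x) mod q)"
    have i: "int i = (- y) mod q" "i < p" and j: "int j = (K * x) mod q" "j < p"
      unfolding i_def j_def using q_pos by (simp_all add: nat_less_iff)
    have "((1 - K) * int j) mod q = ((1 - K) * (K * x)) mod q"
      unfolding j(1) by (simp add: mod_mult_right_eq)
    also have "\<dots> = (K * ((1 - K) * x)) mod q" by (simp add: algebra_simps)
    also have "\<dots> = x mod q" by (rule mult_inverse_K)
    finally have "centre_pair (cell_point i j) = centre_pair P"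
      unfolding centre_pair_eq_iff cell_point_def xy using i(1) by (simp add: mod_minus_eq)
    then have "centre_pair (cell_point i j) = P" using centre_pair_hexagon[OF P] by simp
    with i(2) j(2) P show ?thesis by force
  qed
  then show "?f ` ?C = ?H" by auto
qed

theorem orthogonal_trade_of_size:
  "orthogonal_trade p 1 k (Bk p 1 - fun_square p trade_square) \<and>
   card (Bk p 1 - fun_square p trade_square) = 3 * k * (k - 1)"
proof
  have "k < p" using k_le two_le_k by linarith
  then have "\<not> p dvd k" using two_le_k by (auto dest: dvd_imp_le)
  then have "coprime k p" using prime_imp_coprime[OF prime] by (simp add: coprime_commute)
  then show "orthogonal_trade p 1 k (Bk p 1 - fun_square p trade_square)"
    by (intro orthogonal_trade_fun_square latin_fun_trade_square trade_square_orthogonal_Bk)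
      simp_all
  have "card (Bk p 1 - fun_square p trade_square) =
      card {(i, j). i < p \<and> j < p \<and> centre_pair (cell_point i j) \<in> punctured_hexagon n}"
    unfolding Bk_eq_fun_square card_fun_square_diff
    by (rule arg_cong[where f = card]) (auto simp flip: trade_square_neq_iff)
  also have "\<dots> = card (punctured_hexagon n)" by (rule bij_betw_same_card[OF bij_betw_cell_point])
  also have "\<dots> = 3 * k * (k - 1)"
    using two_le_k by (simp add: card_punctured_hexagon nat_diff_distrib)
  finally show "card (Bk p 1 - fun_square p trade_square) = 3 * k * (k - 1)" .
qed

end

lemma prime_not_dvd_3_mult:
  fixes p a b :: nat
  assumes "prime p" "3 < p" "0 < a" "a < p" "0 < b" "b < p"
  shows "\<not> p dvd 3 * a * b"
  using assms by (auto simp: prime_dvd_mult_iff dest: dvd_imp_le)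

theorem mainTheorem11:
  fixes p :: nat
  assumes "prime p" and "p mod 6 = 1"
  shows "(\<exists>k T. 2 \<le> k \<and> k \<le> p - 1 \<and> orthogonal_trade p 1 k T \<and> \<not> p dvd card T)
       \<and> (\<exists>k::nat. 2 \<le> k \<and> k \<le> (p + 1) div 2 \<and> p dvd (k^2 - k + 1))
       \<and> (\<forall>k::nat. 2 \<le> k \<longrightarrow> k \<le> (p + 1) div 2 \<longrightarrow> p dvd (k^2 - k + 1) \<longrightarrow>
            (\<exists>T. orthogonal_trade p 1 k T \<and> card T = 3 * k * (k - 1)))"
proof -
  have trade: "\<exists>T. orthogonal_trade p 1 k T \<and> card T = 3 * k * (k - 1)"
    if "2 \<le> k" "k \<le> (p + 1) div 2" "p dvd k^2 - k + 1" for k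
  proof -
    interpret hexagonal_trade p k using assms(1) that by unfold_locales
    show ?thesis using orthogonal_trade_of_size by blast
  qed
  obtain k where k: "2 \<le> k" "k \<le> (p + 1) div 2" "p dvd k^2 - k + 1"
    using ex_small_sixth_cyclotomic_root_mod_prime[OF assms] by blast
  then obtain T where T: "orthogonal_trade p 1 k T" "card T = 3 * k * (k - 1)" using trade by blast
  have "7 \<le> p" using prime_ge_2_nat[OF assms(1)] assms(2) by presburger
  then have "k \<le> p - 1" "\<not> p dvd card T"
    using k T(2) prime_not_dvd_3_mult[OF assms(1), of k "k - 1"] by simp_all
  then show ?thesis using k T trade by blast
qed

end
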